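(* For every formula $\varphi$ of propositional linear temporal logic, $\mathrm{LTL} \models \neg \Box (\varphi\leftrightarrow \bigcirc\Box\diamondsuit \neg\varphi)$.
   Context: Propositional linear temporal logic (LTL) with the "next" modality $\bigcirc$, "always" modality $\Box$ and $\diamondsuit\varphi\equiv\neg\Box\neg\varphi$, interpreted over infinite sequences of states $\mathcal{K}=(\eta_0,\eta_1,\dots)$ with $\mathcal{K}_i(\bigcirc\varphi)=\mathcal{K}_{i+1}(\varphi)$, $\mathcal{K}_i(\Box\varphi)=\mathfrak{tt}$ iff $\mathcal{K}_j(\varphi)=\mathfrak{tt}$ for all $j\ge i$. $\mathrm{LTL}\models\varphi$ means validity in all temporal structures. Here $\bigcirc$ denotes the LTL "next" operator. *)

theory Defs
  imports Main
begin

datatype 'a ltl =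
    Atom 'a
  | FF
  | Neg "'a ltl"
  | Imp "'a ltl" "'a ltl"
  | And "'a ltl" "'a ltl"
  | Or "'a ltl" "'a ltl"
  | Next "'a ltl"
  | Always "'a ltl"

definition Iff :: "'a ltl \<Rightarrow> 'a ltl \<Rightarrow> 'a ltl" where
  "Iff p q = And (Imp p q) (Imp q p)"

definition Eventually :: "'a ltl \<Rightarrow> 'a ltl" where
  "Eventually p = Neg (Always (Neg p))"

type_synonym 'a tstruct = "nat \<Rightarrow> 'a \<Rightarrow> bool"

fun holds :: "'a tstruct \<Rightarrow> nat \<Rightarrow> 'a ltl \<Rightarrow> bool" where
  "holds K i (Atom v) = K i v"
| "holds K i FF = False"
| "holds K i (Neg p) = (\<not> holds K i p)"
| "holds K i (Imp p q) = (holds K i p \<longrightarrow> holds K i q)"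
| "holds K i (And p q) = (holds K i p \<and> holds K i q)"
| "holds K i (Or p q) = (holds K i p \<or> holds K i q)"
| "holds K i (Next p) = holds K (Suc i) p"
| "holds K i (Always p) = (\<forall>j\<ge>i. holds K j p)"

definition ltl_valid :: "'a ltl \<Rightarrow> bool" where
  "ltl_valid p = (\<forall>K i. holds K i p)"

end

theory Submission
  imports Defs "HOL-Library.Infinite_Set"
begin

text \<open>The formula \<open>\<circle>\<box>\<diamond>\<not>\<phi>\<close> says that \<open>\<not>\<phi>\<close> holds infinitely often, which does not depend on
  the current position. So if the biconditional held from position \<open>i\<close> on, \<open>\<phi>\<close> would be
  constant there: constantly true leaves only finitely many \<open>\<not>\<phi>\<close>, constantly false gives
  infinitely many, and either way the biconditional fails.\<close>

lemma INFM_nat_ge_iff: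
  fixes n :: nat
  shows "(\<forall>k\<ge>n. \<exists>l\<ge>k. P l) \<longleftrightarrow> (\<exists>\<^sub>\<infinity>l. P l)"
  unfolding INFM_nat_le by (meson le_trans nat_le_linear)

lemma holds_Next_Always_Eventually_iff_INFM:
  "holds K i (Next (Always (Eventually p))) \<longleftrightarrow> (\<exists>\<^sub>\<infinity>l. holds K l p)"
  by (simp add: Eventually_def INFM_nat_ge_iff)

lemma no_tail_equiv_INFM_not:
  fixes P :: "nat \<Rightarrow> bool"
  shows "\<not> (\<forall>j\<ge>i. P j \<longleftrightarrow> (\<exists>\<^sub>\<infinity>l. \<not> P l))"
proof
  assume equiv: "\<forall>j\<ge>i. P j \<longleftrightarrow> (\<exists>\<^sub>\<infinity>l. \<not> P l)"
  show False
  proof (cases "\<exists>\<^sub>\<infinity>l. \<not> P l")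
    case True
    with equiv have "\<forall>j\<ge>i. P j" by blast
    then have "\<forall>\<^sub>\<infinity>l. P l" unfolding MOST_nat_le by blast
    with True show False using not_MOST by blast
  next
    case False
    with equiv have "\<forall>j\<ge>i. \<not> P j" by blast
    then have "\<forall>\<^sub>\<infinity>l. \<not> P l" unfolding MOST_nat_le by blast
    with False show False using MOST_INFM infinite_UNIV_nat by blast
  qed
qed

theorem mainTheorem5:
  fixes \<phi> :: "'a ltl"
  shows "ltl_valid (Neg (Always (Iff \<phi> (Next (Always (Eventually (Neg \<phi>)))))))"
  unfolding ltl_valid_def
proof (intro allI)
  fix K and i :: nat
  have "\<not> (\<forall>j\<ge>i. holds K j \<phi> \<longleftrightarrow> (\<exists>\<^sub>\<infinity>l. \<not> holds K l \<phi>))"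
    by (rule no_tail_equiv_INFM_not)
  then show "holds K i (Neg (Always (Iff \<phi> (Next (Always (Eventually (Neg \<phi>)))))))"
    by (simp only: holds.simps(1-6,8) Iff_def holds_Next_Always_Eventually_iff_INFM) blast
qed

end
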